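(* Let $G$ be an admissible kernel and let $h:\mathbb R\to\mathbb R$ be Lipschitz continuous with $|h(x)|\le C(1+|x|^\zeta)$ for some $\zeta\in(0,1)$, $C>0$. For $n\in\mathbb N$ let $\alpha_n,g_n\in\mathcal L^2$, and let $\mathcal J_n$ be the functional $\mathcal J$ with $\alpha$ replaced by $\alpha_n$ and $g$ replaced by $g_n$ (all other data unchanged). If $\|\alpha_n-\alpha\|\to0$ and $\|g_n-g\|\to0$ as $n\to\infty$, then $$\sup_{u\in\mathcal L^2}\mathcal J_n(u)\to\sup_{u\in\mathcal L^2}\mathcal J(u)\quad (n\to\infty).$$
   Context: Fix $T>0$ and a filtered probability space $(\Omega,\mathcal F,(\mathcal F_t)_{t\in[0,T]},\mathbb P)$ satisfying the usual conditions; $\mathbb E_t$ denotes conditional expectation given $\mathcal F_t$. Let $\mathcal L^2$ be the Hilbert space of progressively measurable $f:[0,T]\times\Omega\to\mathbb R$ with $\mathbb E\int_0^T f_t^2\,dt<\infty$, with norm $\|f\|=(\mathbb E\int_0^Tf_t^2dt)^{1/2}$. A Volterra kernel $G:[0,T]^2\to\mathbb R$ is admissible if $\sup_{t\in[0,T]}\int_0^t|G(t,s)|^2ds<\infty$; $(\mathbf Gu)_t=\int_0^tG(t,s)u_s\,ds$. Model data: constants $X_0>0$, $\gamma>0$, $\phi,\varrho\ge0$; a process $S\in\mathcal L^2$ with $S_T\in L^2(\Omega,\mathcal F_T,\mathbb P)$; a process $g\in\mathcal L^2$; $\alpha_t=\mathbb E_t[S_T-S_t]$. For $u\in\mathcal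 L^2$ set $X^u_t=X_0+\int_0^tu_s\,ds$, $Z^u_t=g_t+(\mathbf Gu)_t$. The performance functional is $$\mathcal J(u)=\mathbb E\Big[\int_0^T\big(\alpha_t-\tfrac\gamma2u_t-h(Z^u_t)\big)u_t\,dt-\tfrac\phi2\int_0^T(X^u_t)^2dt-\tfrac\varrho2(X^u_T)^2\Big]+X_0\mathbb E[S_T].$$ *)

theory Defs
  imports "HOL-Probability.Probability"
begin

definition usual_filtration :: "'a measure \<Rightarrow> (real \<Rightarrow> 'a measure) \<Rightarrow> real \<Rightarrow> bool" where
  "usual_filtration M F T \<longleftrightarrow>
     (\<forall>t\<in>{0..T}. subalgebra M (F t)) \<and>
     (\<forall>s t. 0 \<le> s \<longrightarrow> s \<le> t \<longrightarrow> t \<le> T \<longrightarrow> sets (F s) \<subseteq> sets (F t)) \<and>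
     (\<forall>N. (\<exists>A\<in>sets M. N \<subseteq> A \<and> emeasure M A = 0) \<longrightarrow> N \<in> sets (F 0)) \<and>
     (\<forall>t\<in>{0..<T}. sets (F t) = (\<Inter>s\<in>{t<..T}. sets (F s)))"

definition progressive :: "(real \<Rightarrow> 'a measure) \<Rightarrow> real \<Rightarrow> (real \<Rightarrow> 'a \<Rightarrow> real) \<Rightarrow> bool" where
  "progressive F T f \<longleftrightarrow>
     (\<forall>t\<in>{0..T}. (\<lambda>(s, \<omega>). f s \<omega>) \<in> borel_measurable (restrict_space lborel {0..t} \<Otimes>\<^sub>M F t))"

definition L2proc :: "'a measure \<Rightarrow> (real \<Rightarrow> 'a measure) \<Rightarrow> real \<Rightarrow> (real \<Rightarrow> 'a \<Rightarrow> real) \<Rightarrow> bool" where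
  "L2proc M F T f \<longleftrightarrow> progressive F T f \<and>
     (\<integral>\<^sup>+\<omega>. (\<integral>\<^sup>+s\<in>{0..T}. ennreal ((f s \<omega>)\<^sup>2) \<partial>lborel) \<partial>M) < \<infinity>"

definition L2norm :: "'a measure \<Rightarrow> real \<Rightarrow> (real \<Rightarrow> 'a \<Rightarrow> real) \<Rightarrow> real" where
  "L2norm M T f = sqrt (enn2real (\<integral>\<^sup>+\<omega>. (\<integral>\<^sup>+s\<in>{0..T}. ennreal ((f s \<omega>)\<^sup>2) \<partial>lborel) \<partial>M))"

definition admissible_kernel :: "real \<Rightarrow> (real \<Rightarrow> real \<Rightarrow> real) \<Rightarrow> bool" where
  "admissible_kernel T G \<longleftrightarrow> (\<lambda>(t, s). G t s) \<in> borel_measurable borel \<and>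
     (\<exists>B. \<forall>t\<in>{0..T}. (\<integral>\<^sup>+s\<in>{0..t}. ennreal ((G t s)\<^sup>2) \<partial>lborel) \<le> ennreal B)"

definition volterra :: "(real \<Rightarrow> real \<Rightarrow> real) \<Rightarrow> (real \<Rightarrow> 'a \<Rightarrow> real) \<Rightarrow> real \<Rightarrow> 'a \<Rightarrow> real" where
  "volterra G u t \<omega> = (LINT s:{0..t}|lborel. G t s * u s \<omega>)"

definition inventory :: "real \<Rightarrow> (real \<Rightarrow> 'a \<Rightarrow> real) \<Rightarrow> real \<Rightarrow> 'a \<Rightarrow> real" where
  "inventory X0 u t \<omega> = X0 + (LINT s:{0..t}|lborel. u s \<omega>)"

definition perf :: "'a measure \<Rightarrow> real \<Rightarrow> real \<Rightarrow> real \<Rightarrow> real \<Rightarrow> real \<Rightarrow>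
    (real \<Rightarrow> 'a \<Rightarrow> real) \<Rightarrow> (real \<Rightarrow> real) \<Rightarrow> (real \<Rightarrow> real \<Rightarrow> real) \<Rightarrow>
    (real \<Rightarrow> 'a \<Rightarrow> real) \<Rightarrow> (real \<Rightarrow> 'a \<Rightarrow> real) \<Rightarrow> (real \<Rightarrow> 'a \<Rightarrow> real) \<Rightarrow> real" where
  "perf M T X0 \<gamma> \<phi> \<rho> S h G \<alpha> g u =
     (\<integral>\<omega>. (LINT t:{0..T}|lborel.
              (\<alpha> t \<omega> - \<gamma> / 2 * u t \<omega> - h (g t \<omega> + volterra G u t \<omega>)) * u t \<omega>)
           - \<phi> / 2 * (LINT t:{0..T}|lborel. (inventory X0 u t \<omega>)\<^sup>2)
           - \<rho> / 2 * (inventory X0 u T \<omega>)\<^sup>2 \<partial>M)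
     + X0 * (\<integral>\<omega>. S T \<omega> \<partial>M)"

end

theory Submission
  imports Defs
begin

(*
  On the product space \<Omega> \<times> [0,T] the functional splits as
  J(u) = \<integral> (\<alpha> - \<gamma>/2 u - h(g + G u)) u + W(u), where the inventory part W(u) \<le> X0 E[S_T]
  does not involve \<alpha> or g. Because h grows with exponent \<zeta> < 1 and G is bounded on L^2,
  Young's inequality absorbs h(g + G u) u into a quarter of the running cost, so
  J(u) \<le> K - \<gamma>/4 \<parallel>u\<parallel>^2 with K uniform over bounded data: the near-maximisers of all J_n
  lie in one fixed ball. On that ball the Lipschitz bound on h gives, for every \<kappa> > 0,
  |J_n(u) - J(u)| \<le> (\<parallel>\<alpha>_n - \<alpha>\<parallel>^2 + L^2 \<parallel>g_n - g\<parallel>^2)/\<kappa> + \<kappa>/2 \<parallel>u\<parallel>^2,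
  which is uniformly small.
*)

lemma mult_le_square_div_add_square:
  fixes x y c :: real
  assumes "c > 0"
  shows "x * y \<le> x\<^sup>2 / (2 * c) + c * y\<^sup>2 / 2"
proof -
  have "0 \<le> (x - c * y)\<^sup>2 / (2 * c)" using assms by simp
  also have "\<dots> = x\<^sup>2 / (2 * c) + c * y\<^sup>2 / 2 - x * y"
    using assms by (simp add: power2_eq_square field_simps)
  finally show ?thesis by simp
qed

lemma square_add_le: "(a + b)\<^sup>2 \<le> 2 * a\<^sup>2 + 2 * (b::real)\<^sup>2"
proof -
  have "0 \<le> (a - b)\<^sup>2" by simp
  then show ?thesis by (simp add: power2_eq_square algebra_simps)
qed

lemma powr_le_eps_square_add_const:
  fixes x \<eta> \<zeta> :: real
  assumes "0 \<le> x" "\<eta> > 0" "0 < \<zeta>" "\<zeta> < 1"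
  shows "x powr (2 * \<zeta>) \<le> \<eta> * x\<^sup>2 + (1 / \<eta>) powr (\<zeta> / (1 - \<zeta>))"
proof (cases "x \<le> (1 / \<eta>) powr (1 / (2 - 2 * \<zeta>))")
  case True
  then have "x powr (2 * \<zeta>) \<le> ((1 / \<eta>) powr (1 / (2 - 2 * \<zeta>))) powr (2 * \<zeta>)"
    using assms by (intro powr_mono2) auto
  also have "\<dots> = (1 / \<eta>) powr (\<zeta> / (1 - \<zeta>))"
  proof -
    have "1 / (2 - 2 * \<zeta>) * (2 * \<zeta>) = \<zeta> / (1 - \<zeta>)" using assms by (simp add: field_simps)
    then show ?thesis by (simp add: powr_powr)
  qed
  finally show ?thesis using assms by (smt (verit) mult_nonneg_nonneg zero_le_power2)
next
  case False
  then have x: "x > 0" using assms by (smt (verit) powr_ge_zero)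
  have "1 / \<eta> = ((1 / \<eta>) powr (1 / (2 - 2 * \<zeta>))) powr (2 - 2 * \<zeta>)"
    using assms by (simp add: powr_powr)
  also have "\<dots> \<le> x powr (2 - 2 * \<zeta>)" using False assms by (intro powr_mono2) auto
  finally have "x powr (2 * \<zeta>) * (1 / \<eta>) \<le> x powr (2 * \<zeta>) * x powr (2 - 2 * \<zeta>)"
    by (intro mult_left_mono) auto
  also have "\<dots> = x\<^sup>2" using x by (simp add: powr_add[symmetric] powr_numeral)
  finally have "x powr (2 * \<zeta>) \<le> \<eta> * x\<^sup>2" using assms by (simp add: field_simps)
  then show ?thesis by (smt (verit) powr_ge_zero)
qed

text \<open>By sublinear growth, \<open>y u\<close> uses up only part of the quadratic cost \<open>\<gamma>/2 u\<^sup>2\<close>,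
  at the price of a term quadratic in the state \<open>g + V\<close> with arbitrarily small
  coefficient \<open>\<eta>\<close>.\<close>
lemma gain_integrand_le:
  fixes a u g V y \<gamma> C \<zeta> \<eta> :: real
  assumes "\<gamma> > 0" "\<eta> > 0" "0 < \<zeta>" "\<zeta> < 1"
    and growth: "\<bar>y\<bar> \<le> C * (1 + \<bar>g + V\<bar> powr \<zeta>)"
  shows "(a - \<gamma> / 2 * u - y) * u \<le> 4 / \<gamma> * a\<^sup>2
     + 4 * C\<^sup>2 / \<gamma> * (1 + (1 / \<eta>) powr (\<zeta> / (1 - \<zeta>)) + 2 * \<eta> * g\<^sup>2 + 2 * \<eta> * V\<^sup>2)
     - 5 * \<gamma> / 16 * u\<^sup>2"
proof -
  define Z where "Z = g + V"
  define K where "K = (1 / \<eta>) powr (\<zeta> / (1 - \<zeta>))"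
  have c: "\<gamma> / 8 > 0" using assms by simp
  have au: "a * u \<le> 4 / \<gamma> * a\<^sup>2 + \<gamma> / 16 * u\<^sup>2"
    using mult_le_square_div_add_square[OF c, of a u] by (simp add: field_simps)
  have Cu: "C * \<bar>u\<bar> \<le> 4 / \<gamma> * C\<^sup>2 + \<gamma> / 16 * u\<^sup>2"
    using mult_le_square_div_add_square[OF c, of C "\<bar>u\<bar>"] by (simp add: field_simps)
  have CZu: "C * \<bar>Z\<bar> powr \<zeta> * \<bar>u\<bar> \<le> 4 / \<gamma> * (C\<^sup>2 * \<bar>Z\<bar> powr (2 * \<zeta>)) + \<gamma> / 16 * u\<^sup>2"
  proof -
    have sq: "(C * \<bar>Z\<bar> powr \<zeta>)\<^sup>2 = C\<^sup>2 * \<bar>Z\<bar> powr (2 * \<zeta>)"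
      by (simp add: power_mult_distrib power2_eq_square powr_add[symmetric])
    have "C * \<bar>Z\<bar> powr \<zeta> * \<bar>u\<bar> \<le> (C * \<bar>Z\<bar> powr \<zeta>)\<^sup>2 / (2 * (\<gamma> / 8)) + \<gamma> / 8 * \<bar>u\<bar>\<^sup>2 / 2"
      by (rule mult_le_square_div_add_square[OF c])
    then show ?thesis unfolding sq by (simp add: field_simps)
  qed
  have "\<bar>Z\<bar> powr (2 * \<zeta>) \<le> \<eta> * \<bar>Z\<bar>\<^sup>2 + K"
    unfolding K_def using assms by (intro powr_le_eps_square_add_const) auto
  also have "\<dots> \<le> \<eta> * (2 * g\<^sup>2 + 2 * V\<^sup>2) + K"
    using square_add_le[of g V] assms unfolding Z_def by (intro add_right_mono mult_left_mono) auto
  finally have "4 / \<gamma> * (C\<^sup>2 * \<bar>Z\<bar> powr (2 * \<zeta>)) \<le> 4 / \<gamma> * (C\<^sup>2 * (\<eta> * (2 * g\<^sup>2 + 2 * V\<^sup>2) + K))"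
    using assms by (intro mult_left_mono) auto
  moreover have "- (y * u) \<le> C * \<bar>u\<bar> + C * \<bar>Z\<bar> powr \<zeta> * \<bar>u\<bar>"
  proof -
    have "- (y * u) \<le> \<bar>y\<bar> * \<bar>u\<bar>" by (simp add: abs_mult[symmetric])
    also have "\<dots> \<le> C * (1 + \<bar>Z\<bar> powr \<zeta>) * \<bar>u\<bar>"
      using growth unfolding Z_def by (intro mult_right_mono) auto
    finally show ?thesis by (simp add: algebra_simps)
  qed
  ultimately show ?thesis
    using au Cu CZu unfolding Z_def K_def by (simp add: algebra_simps power2_eq_square)
qed

text \<open>Coercivity confines the near-maximisers of every \<open>J n\<close> to one sublevel set of \<open>N\<close>,
  on which \<open>J n\<close> is uniformly close to \<open>J'\<close>.\<close>
lemma eventually_le_if_coercive_locally_uniform: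
  fixes J :: "nat \<Rightarrow> 'b \<Rightarrow> real" and J' N :: "'b \<Rightarrow> real"
  assumes "c > 0" "\<epsilon> > 0"
    and J'_le: "\<And>u. u \<in> U \<Longrightarrow> J' u \<le> r"
    and coercive: "\<forall>\<^sub>F n in sequentially. \<forall>u\<in>U. J n u \<le> K - c * N u"
    and uniform: "\<And>R \<epsilon>. \<epsilon> > 0 \<Longrightarrow>
      \<forall>\<^sub>F n in sequentially. \<forall>u\<in>U. N u \<le> R \<longrightarrow> \<bar>J n u - J' u\<bar> \<le> \<epsilon>"
  shows "\<forall>\<^sub>F n in sequentially. \<forall>u\<in>U. J n u \<le> r + \<epsilon>"
  using eventually_conj[OF coercive uniform[OF \<open>\<epsilon> > 0\<close>, of "(K - r) / c"]]
proof (rule eventually_mono, intro ballI)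
  fix n u
  assume n: "(\<forall>u\<in>U. J n u \<le> K - c * N u) \<and>
      (\<forall>u\<in>U. N u \<le> (K - r) / c \<longrightarrow> \<bar>J n u - J' u\<bar> \<le> \<epsilon>)"
    and u: "u \<in> U"
  show "J n u \<le> r + \<epsilon>"
  proof (cases "N u \<le> (K - r) / c")
    case True
    then show ?thesis using n u J'_le[OF u] by force
  next
    case False
    then have "K - c * N u < r" using \<open>c > 0\<close> by (simp add: field_simps)
    moreover have "J n u \<le> K - c * N u" using n u by blast
    ultimately show ?thesis using \<open>\<epsilon> > 0\<close> by linarith
  qed
qed

lemma tendsto_SUP_if_coercive_locally_uniform:
  fixes J :: "nat \<Rightarrow> 'b \<Rightarrow> real" and J' N :: "'b \<Rightarrow> real"
  assumes "U \<noteq> {}" and "c > 0"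
    and bdd: "\<And>u. u \<in> U \<Longrightarrow> J' u \<le> K"
    and coercive: "\<forall>\<^sub>F n in sequentially. \<forall>u\<in>U. J n u \<le> K - c * N u"
    and uniform: "\<And>R \<epsilon>. \<epsilon> > 0 \<Longrightarrow>
      \<forall>\<^sub>F n in sequentially. \<forall>u\<in>U. N u \<le> R \<longrightarrow> \<bar>J n u - J' u\<bar> \<le> \<epsilon>"
  shows "(\<lambda>n. SUP u\<in>U. ereal (J n u)) \<longlonglongrightarrow> (SUP u\<in>U. ereal (J' u))"
proof -
  obtain u0 where u0: "u0 \<in> U" using assms(1) by blast
  define s where "s = (SUP u\<in>U. ereal (J' u))"
  have "ereal (J' u0) \<le> s" unfolding s_def using u0 by (rule SUP_upper)
  moreover have "s \<le> ereal K" unfolding s_def using bdd by (simp add: SUP_least)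
  ultimately obtain r where r: "s = ereal r" by (cases s) auto
  show ?thesis unfolding s_def[symmetric]
  proof (rule order_tendstoI)
    fix a assume "a < s"
    then obtain u where u: "u \<in> U" "a < ereal (J' u)" unfolding s_def by (auto simp: less_SUP_iff)
    have "(\<lambda>n. J n u) \<longlonglongrightarrow> J' u"
    proof (rule tendstoI)
      fix \<epsilon> :: real assume "\<epsilon> > 0"
      then have "\<forall>\<^sub>F n in sequentially. \<bar>J n u - J' u\<bar> \<le> \<epsilon> / 2"
        using uniform[of "\<epsilon> / 2" "N u"] u(1) by (auto elim: eventually_mono)
      then show "\<forall>\<^sub>F n in sequentially. dist (J n u) (J' u) < \<epsilon>"
        using \<open>\<epsilon> > 0\<close> by (auto simp: dist_real_def elim: eventually_mono)
    qed
    then have "\<forall>\<^sub>F n in sequentially. a < ereal (J n u)"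
      using u(2) by (intro order_tendstoD(1)) (auto intro: tendsto_ereal)
    then show "\<forall>\<^sub>F n in sequentially. a < (SUP u\<in>U. ereal (J n u))"
      using u(1) by (auto simp: less_SUP_iff elim!: eventually_mono)
  next
    fix a assume "s < a"
    then obtain b where "s < b" "b < a" using dense by blast
    then obtain b' where b': "b = ereal b'" "r < b'" using r by (cases b) auto
    define \<epsilon> where "\<epsilon> = (b' - r) / 2"
    have \<epsilon>: "\<epsilon> > 0" "r + \<epsilon> < b'" using b'(2) by (simp_all add: \<epsilon>_def field_simps)
    have J'_le: "J' u \<le> r" if "u \<in> U" for u
      using SUP_upper[OF that, of "\<lambda>u. ereal (J' u)"] r unfolding s_def by simp
    have "\<forall>\<^sub>F n in sequentially. \<forall>u\<in>U. J n u \<le> r + \<epsilon>"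
      using eventually_le_if_coercive_locally_uniform[OF \<open>c > 0\<close> \<epsilon>(1) J'_le coercive uniform] .
    then show "\<forall>\<^sub>F n in sequentially. (SUP u\<in>U. ereal (J n u)) < a"
    proof (rule eventually_mono)
      fix n assume "\<forall>u\<in>U. J n u \<le> r + \<epsilon>"
      then have "(SUP u\<in>U. ereal (J n u)) \<le> ereal (r + \<epsilon>)" by (simp add: SUP_least)
      also have "\<dots> < b" using b' \<epsilon> by simp
      finally show "(SUP u\<in>U. ereal (J n u)) < a" using \<open>b < a\<close> by simp
    qed
  qed
qed

definition square_integrable :: "'b measure \<Rightarrow> ('b \<Rightarrow> real) \<Rightarrow> bool" where
  "square_integrable N f \<longleftrightarrow> f \<in> borel_measurable N \<and> integrable N (\<lambda>x. (f x)\<^sup>2)"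

definition sqnorm :: "'b measure \<Rightarrow> ('b \<Rightarrow> real) \<Rightarrow> real" where
  "sqnorm N f = (\<integral>x. (f x)\<^sup>2 \<partial>N)"

lemma sqnorm_nonneg: "sqnorm N f \<ge> 0"
  unfolding sqnorm_def by (rule integral_nonneg_AE) auto

lemma square_integrable_dominated:
  assumes "f \<in> borel_measurable N" "integrable N k" "\<And>x. x \<in> space N \<Longrightarrow> (f x)\<^sup>2 \<le> k x"
  shows "square_integrable N f"
  unfolding square_integrable_def
proof
  have "\<bar>(f x)\<^sup>2\<bar> \<le> \<bar>k x\<bar>" if "x \<in> space N" for x
    using assms(3)[OF that] by simp
  then show "integrable N (\<lambda>x. (f x)\<^sup>2)"
    using assms by (intro Bochner_Integration.integrable_bound[OF assms(2)]) (auto intro: AE_I2)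
qed (fact assms(1))

lemma square_integrable_add:
  assumes "square_integrable N f" "square_integrable N g"
  shows "square_integrable N (\<lambda>x. f x + g x)"
proof (rule square_integrable_dominated)
  show "integrable N (\<lambda>x. 2 * (f x)\<^sup>2 + 2 * (g x)\<^sup>2)"
    using assms unfolding square_integrable_def by auto
qed (use assms square_add_le in \<open>auto simp: square_integrable_def\<close>)

lemma square_integrable_cmult:
  "square_integrable N f \<Longrightarrow> square_integrable N (\<lambda>x. c * f x)"
  unfolding square_integrable_def by (auto simp: power_mult_distrib)

lemma square_integrable_diff:
  assumes "square_integrable N f" "square_integrable N g"
  shows "square_integrable N (\<lambda>x. f x - g x)"
  using square_integrable_add[OF assms(1) square_integrable_cmult[OF assms(2), of "-1"]] by simp

lemma (in finite_measure) square_integrable_const: "square_integrable M (\<lambda>x. c)"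
  unfolding square_integrable_def by auto

lemma integrable_mult_if_square_integrable:
  assumes "square_integrable N f" "square_integrable N g"
  shows "integrable N (\<lambda>x. f x * g x)"
proof (rule Bochner_Integration.integrable_bound)
  show "integrable N (\<lambda>x. (f x)\<^sup>2 / 2 + (g x)\<^sup>2 / 2)"
    using assms unfolding square_integrable_def by auto
  show "(\<lambda>x. f x * g x) \<in> borel_measurable N"
    using assms unfolding square_integrable_def by auto
  have "\<bar>f x * g x\<bar> \<le> (f x)\<^sup>2 / 2 + (g x)\<^sup>2 / 2" for x
    using mult_le_square_div_add_square[of 1 "\<bar>f x\<bar>" "\<bar>g x\<bar>"] by (simp add: abs_mult)
  then show "AE x in N. norm (f x * g x) \<le> norm ((f x)\<^sup>2 / 2 + (g x)\<^sup>2 / 2)"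
    by (intro AE_I2) (smt (verit) real_norm_def zero_le_power2)
qed

lemma sqnorm_le_twice:
  assumes "square_integrable N f" "square_integrable N g"
  shows "sqnorm N g \<le> 2 * sqnorm N f + 2 * sqnorm N (\<lambda>x. g x - f x)"
proof -
  have fg: "square_integrable N (\<lambda>x. g x - f x)" using square_integrable_diff[OF assms(2,1)] .
  have "sqnorm N g \<le> (\<integral>x. 2 * (f x)\<^sup>2 + 2 * (g x - f x)\<^sup>2 \<partial>N)"
    unfolding sqnorm_def
    using assms fg square_add_le[of "f x" "g x - f x" for x]
    by (intro integral_mono) (auto simp: square_integrable_def)
  also have "\<dots> = 2 * sqnorm N f + 2 * sqnorm N (\<lambda>x. g x - f x)"
    using assms fg unfolding sqnorm_def square_integrable_def by simp
  finally show ?thesis .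
qed

lemma square_integral_mult_le:
  fixes k v :: "'b \<Rightarrow> real"
  assumes [measurable]: "k \<in> borel_measurable N" "v \<in> borel_measurable N"
  shows "ennreal ((\<integral>s. k s * v s \<partial>N)\<^sup>2)
    \<le> (\<integral>\<^sup>+s. ennreal ((k s)\<^sup>2) \<partial>N) * (\<integral>\<^sup>+s. ennreal ((v s)\<^sup>2) \<partial>N)"
proof -
  have "ennreal \<bar>\<integral>s. k s * v s \<partial>N\<bar> \<le> (\<integral>\<^sup>+s. ennreal \<bar>k s\<bar> * ennreal \<bar>v s\<bar> \<partial>N)"
    using integral_norm_bound_ennreal[of N "\<lambda>s. k s * v s"]
    by (cases "integrable N (\<lambda>s. k s * v s)")
      (auto simp: not_integrable_integral_eq abs_mult ennreal_mult)
  then have "(ennreal \<bar>\<integral>s. k s * v s \<partial>N\<bar>)\<^sup>2 \<le> (\<integral>\<^sup>+s. ennreal \<bar>k s\<bar> * ennreal \<bar>v s\<bar> \<partial>N)\<^sup>2"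
    by (rule power_mono) simp
  then have "ennreal ((\<integral>s. k s * v s \<partial>N)\<^sup>2) \<le> (\<integral>\<^sup>+s. ennreal \<bar>k s\<bar> * ennreal \<bar>v s\<bar> \<partial>N)\<^sup>2"
    by (simp add: ennreal_power)
  also have "\<dots> \<le> (\<integral>\<^sup>+s. (ennreal \<bar>k s\<bar>)\<^sup>2 \<partial>N) * (\<integral>\<^sup>+s. (ennreal \<bar>v s\<bar>)\<^sup>2 \<partial>N)"
    by (rule Cauchy_Schwarz_nn_integral) measurable
  finally show ?thesis by (simp add: ennreal_power)
qed

text \<open>Processes are treated as functions on \<open>\<Omega> \<times> [0,T]\<close>; the paper's norm \<open>\<parallel>f\<parallel>\<^sup>2\<close>
  on \<open>\<L>\<^sup>2\<close> becomes \<open>sqnorm P (hat f)\<close> with \<open>P = M \<Otimes> Lebesgue[0,T]\<close>.\<close>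
definition hat :: "(real \<Rightarrow> 'a \<Rightarrow> real) \<Rightarrow> 'a \<times> real \<Rightarrow> real" where
  "hat f = (\<lambda>(\<omega>, t). f t \<omega>)"

lemma hat_apply [simp]: "hat f (\<omega>, t) = f t \<omega>"
  by (simp add: hat_def)

lemma inventory_eq_volterra: "inventory X0 u t \<omega> = X0 + volterra (\<lambda>_ _. 1) u t \<omega>"
  by (simp add: inventory_def volterra_def)

locale horizon_product = prob_space M for M :: "'a measure" +
  fixes F :: "real \<Rightarrow> 'a measure" and T :: real
  assumes T_pos: "T > 0" and subalgebra_horizon: "subalgebra M (F T)"
begin

definition Lam :: "real measure" where
  "Lam = restrict_space lborel {0..T}"

abbreviation P :: "('a \<times> real) measure" where
  "P \<equiv> M \<Otimes>\<^sub>M Lam"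

lemma space_Lam [simp]: "space Lam = {0..T}"
  by (simp add: Lam_def)

lemma emeasure_Lam_space: "emeasure Lam (space Lam) = ennreal T"
  unfolding Lam_def using T_pos by (simp add: emeasure_restrict_space)

sublocale Lam: finite_measure Lam
  unfolding Lam_def
  by (intro finite_measureI) (simp add: emeasure_restrict_space emeasure_lborel_Icc_eq)

sublocale P: pair_sigma_finite M Lam
  by unfold_locales

sublocale P: finite_measure P
  by (rule finite_measure_pair_measure) unfold_locales

lemma measure_P_space: "measure P (space P) = T"
proof -
  have "emeasure P (space M \<times> space Lam) = emeasure M (space M) * emeasure Lam (space Lam)"
    by (rule Lam.emeasure_pair_measure_Times[OF sets.top sets.top])
  then show ?thesis
    using emeasure_Lam_space T_pos by (simp add: space_pair_measure emeasure_space_1 measure_def)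
qed

lemma measurable_Lam_id: "(\<lambda>x. x) \<in> borel_measurable Lam"
  unfolding Lam_def by (rule measurable_restrict_space1) simp

lemma measurable_hat_if_progressive:
  assumes "progressive F T f"
  shows "hat f \<in> borel_measurable P"
proof -
  have f: "(\<lambda>(s, \<omega>). f s \<omega>) \<in> borel_measurable (Lam \<Otimes>\<^sub>M F T)"
    using assms T_pos unfolding progressive_def Lam_def by auto
  have "fst \<in> measurable P (F T)"
    using measurable_mono[of "F T" M P P] subalgebra_horizon measurable_fst[of M Lam]
    unfolding subalgebra_def by auto
  then have "(\<lambda>(\<omega>, t). (t, \<omega>)) \<in> measurable P (Lam \<Otimes>\<^sub>M F T)"
    using measurable_Pair[OF measurable_snd] by (simp add: case_prod_beta')
  from measurable_comp[OF this f] show ?thesis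
    unfolding hat_def by (simp add: comp_def case_prod_beta')
qed

lemma nn_integral_Icc_eq_Lam: "(\<integral>\<^sup>+s\<in>{0..T}. f s \<partial>lborel) = (\<integral>\<^sup>+s. f s \<partial>Lam)"
  unfolding Lam_def by (subst nn_integral_restrict_space) auto

lemma set_integral_Icc_eq_Lam:
  fixes f :: "real \<Rightarrow> real"
  assumes "0 \<le> t" "t \<le> T"
  shows "(LINT s:{0..t}|lborel. f s) = (\<integral>s. indicator {0..t} s * f s \<partial>Lam)"
proof -
  have "(\<integral>s. indicator {0..t} s * f s \<partial>Lam)
      = (\<integral>s. indicator {0..T} s *\<^sub>R (indicator {0..t} s * f s) \<partial>lborel)"
    unfolding Lam_def by (subst Bochner_Integration.integral_restrict_space) auto
  also have "\<dots> = (\<integral>s. indicator {0..t} s *\<^sub>R f s \<partial>lborel)"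
    using assms by (intro Bochner_Integration.integral_cong) (auto simp: indicator_def)
  finally show ?thesis unfolding set_lebesgue_integral_def by simp
qed

lemma set_integral_horizon_eq_Lam:
  "(LINT s:{0..T}|lborel. (f :: real \<Rightarrow> real) s) = (\<integral>s. f s \<partial>Lam)"
  unfolding Lam_def set_lebesgue_integral_def
  by (subst Bochner_Integration.integral_restrict_space) auto

lemma nn_integral_square_hat:
  assumes "hat f \<in> borel_measurable P"
  shows "(\<integral>\<^sup>+\<omega>. (\<integral>\<^sup>+s\<in>{0..T}. ennreal ((f s \<omega>)\<^sup>2) \<partial>lborel) \<partial>M)
     = (\<integral>\<^sup>+p. ennreal ((hat f p)\<^sup>2) \<partial>P)"
proof -
  have "(\<lambda>p. ennreal ((hat f p)\<^sup>2)) \<in> borel_measurable P" using assms by measurable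
  from Lam.nn_integral_fst[OF this] show ?thesis
    unfolding nn_integral_Icc_eq_Lam by (simp add: hat_def)
qed

lemma square_integrable_hat:
  assumes "L2proc M F T f"
  shows "square_integrable P (hat f)"
proof -
  have m: "hat f \<in> borel_measurable P"
    using assms measurable_hat_if_progressive unfolding L2proc_def by blast
  have "(\<integral>\<^sup>+p. ennreal ((hat f p)\<^sup>2) \<partial>P) < \<infinity>"
    using assms nn_integral_square_hat[OF m] unfolding L2proc_def by simp
  then show ?thesis unfolding square_integrable_def using m
    by (intro conjI integrableI_bounded) auto
qed

lemma L2norm_eq_sqrt_sqnorm:
  assumes "L2proc M F T f" "L2proc M F T g"
  shows "L2norm M T (\<lambda>t \<omega>. f t \<omega> - g t \<omega>) = sqrt (sqnorm P (\<lambda>p. hat f p - hat g p))"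
proof -
  have hat_diff: "hat (\<lambda>t \<omega>. f t \<omega> - g t \<omega>) = (\<lambda>p. hat f p - hat g p)"
    by (auto simp: hat_def)
  have sq: "square_integrable P (\<lambda>p. hat f p - hat g p)"
    using assms by (intro square_integrable_diff square_integrable_hat)
  then have "(\<integral>\<^sup>+\<omega>. (\<integral>\<^sup>+s\<in>{0..T}. ennreal ((f s \<omega> - g s \<omega>)\<^sup>2) \<partial>lborel) \<partial>M)
      = (\<integral>\<^sup>+p. ennreal ((hat f p - hat g p)\<^sup>2) \<partial>P)"
    using nn_integral_square_hat[of "\<lambda>t \<omega>. f t \<omega> - g t \<omega>"]
    unfolding hat_diff square_integrable_def by simp
  also have "\<dots> = ennreal (sqnorm P (\<lambda>p. hat f p - hat g p))"
    using sq unfolding sqnorm_def square_integrable_def by (intro nn_integral_eq_integral) auto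
  finally show ?thesis unfolding L2norm_def using sqnorm_nonneg[of P] by simp
qed

lemma sqnorm_diff_tendsto_0:
  assumes "L2proc M F T f" "\<And>n. L2proc M F T (fn n)"
    and "(\<lambda>n. L2norm M T (\<lambda>t \<omega>. fn n t \<omega> - f t \<omega>)) \<longlonglongrightarrow> 0"
  shows "(\<lambda>n. sqnorm P (\<lambda>p. hat (fn n) p - hat f p)) \<longlonglongrightarrow> 0"
proof -
  have "(\<lambda>n. (L2norm M T (\<lambda>t \<omega>. fn n t \<omega> - f t \<omega>))\<^sup>2) \<longlonglongrightarrow> 0"
    using tendsto_power[OF assms(3), of 2] by simp
  then show ?thesis
    unfolding L2norm_eq_sqrt_sqnorm[OF assms(2) assms(1)] using sqnorm_nonneg[of P] by simp
qed

lemma measurable_kernel_integrand: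
  assumes u: "hat u \<in> borel_measurable P" and K: "(\<lambda>(t, s). K t s) \<in> borel_measurable borel"
  shows "(\<lambda>((\<omega>, t), s). indicator {0..t} s * (K t s * u s \<omega>)) \<in> borel_measurable (P \<Otimes>\<^sub>M Lam)"
proof -
  note measurable_compose[OF measurable_snd[of P Lam] measurable_Lam_id, measurable]
    measurable_compose[OF measurable_compose[OF measurable_fst[of P Lam] measurable_snd[of M Lam]]
      measurable_Lam_id, measurable]
  have "(\<lambda>((\<omega>, t), s). (\<omega>, s)) \<in> measurable (P \<Otimes>\<^sub>M Lam) P"
    by (simp add: case_prod_beta') measurable
  from measurable_comp[OF this u]
  have "(\<lambda>((\<omega>, t), s). u s \<omega>) \<in> borel_measurable (P \<Otimes>\<^sub>M Lam)"
    by (simp add: comp_def case_prod_beta')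
  moreover have "(\<lambda>((\<omega>, t), s). (t, s)) \<in> borel_measurable (P \<Otimes>\<^sub>M Lam)"
    by (simp add: case_prod_beta') measurable
  from measurable_comp[OF this K]
  have "(\<lambda>((\<omega>, t), s). K t s) \<in> borel_measurable (P \<Otimes>\<^sub>M Lam)"
    by (simp add: comp_def case_prod_beta')
  moreover have "{x \<in> space (P \<Otimes>\<^sub>M Lam). 0 \<le> snd x \<and> snd x \<le> snd (fst x)} \<in> sets (P \<Otimes>\<^sub>M Lam)"
    by measurable
  then have "(\<lambda>((\<omega>, t), s). indicator {0..t} s :: real) \<in> borel_measurable (P \<Otimes>\<^sub>M Lam)"
    by (rule borel_measurable_indicator[THEN measurable_cong[THEN iffD1, rotated]])
      (auto simp: indicator_def)
  ultimately show ?thesis by (simp add: case_prod_beta') measurable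
qed

lemma volterra_eq_Lam:
  assumes "0 \<le> t" "t \<le> T"
  shows "volterra K u t \<omega> = (\<integral>s. indicator {0..t} s * (K t s * u s \<omega>) \<partial>Lam)"
  unfolding volterra_def using set_integral_Icc_eq_Lam[OF assms] .

lemma measurable_hat_volterra:
  assumes "hat u \<in> borel_measurable P" "(\<lambda>(t, s). K t s) \<in> borel_measurable borel"
  shows "hat (volterra K u) \<in> borel_measurable P"
proof -
  have "(\<lambda>(\<omega>, t). \<integral>s. indicator {0..t} s * (K t s * u s \<omega>) \<partial>Lam) \<in> borel_measurable P"
    using Lam.borel_measurable_lebesgue_integral[OF measurable_kernel_integrand[OF assms]]
    by (simp add: case_prod_beta')
  then show ?thesis
    by (rule measurable_cong[THEN iffD1, rotated]) (auto simp: space_pair_measure volterra_eq_Lam)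
qed

definition energy :: "(real \<Rightarrow> 'a \<Rightarrow> real) \<Rightarrow> 'a \<Rightarrow> ennreal" where
  "energy u \<omega> = (\<integral>\<^sup>+s. ennreal ((u s \<omega>)\<^sup>2) \<partial>Lam)"

lemma measurable_energy:
  assumes "hat u \<in> borel_measurable P"
  shows "energy u \<in> borel_measurable M"
proof -
  note assms[measurable]
  have "(\<lambda>p. ennreal ((hat u p)\<^sup>2)) \<in> borel_measurable P" by measurable
  from Lam.borel_measurable_nn_integral_fst[OF this] show ?thesis
    unfolding energy_def by (simp add: hat_def)
qed

lemma nn_integral_energy:
  assumes "square_integrable P (hat u)"
  shows "(\<integral>\<^sup>+\<omega>. energy u \<omega> \<partial>M) = ennreal (sqnorm P (hat u))"
proof -
  have [measurable]: "hat u \<in> borel_measurable P"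
    using assms unfolding square_integrable_def by blast
  have "(\<lambda>p. ennreal ((hat u p)\<^sup>2)) \<in> borel_measurable P" by measurable
  from Lam.nn_integral_fst[OF this]
  have "(\<integral>\<^sup>+\<omega>. energy u \<omega> \<partial>M) = (\<integral>\<^sup>+p. ennreal ((hat u p)\<^sup>2) \<partial>P)"
    unfolding energy_def by (simp add: hat_def)
  also have "\<dots> = ennreal (sqnorm P (hat u))"
    using assms unfolding sqnorm_def square_integrable_def by (intro nn_integral_eq_integral) auto
  finally show ?thesis .
qed

lemma volterra_square_le_energy:
  assumes u: "hat u \<in> borel_measurable P" and K: "(\<lambda>(t, s). K t s) \<in> borel_measurable borel"
    and \<omega>: "\<omega> \<in> space M" and t: "0 \<le> t" "t \<le> T"
    and bound: "(\<integral>\<^sup>+s\<in>{0..t}. ennreal ((K t s)\<^sup>2) \<partial>lborel) \<le> ennreal B"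
  shows "ennreal ((volterra K u t \<omega>)\<^sup>2) \<le> ennreal B * energy u \<omega>"
proof -
  have "(\<lambda>s. (t, s)) \<in> borel_measurable Lam"
    using measurable_Lam_id by (intro borel_measurable_Pair) auto
  from measurable_comp[OF this K] have "(\<lambda>s. K t s) \<in> borel_measurable Lam"
    by (simp add: comp_def)
  then have k: "(\<lambda>s. indicator {0..t} s * K t s) \<in> borel_measurable Lam"
    using measurable_comp[OF measurable_Lam_id borel_measurable_indicator[of "{0..t}" borel]]
    by (intro borel_measurable_times) (simp_all add: comp_def)
  have v: "(\<lambda>s. u s \<omega>) \<in> borel_measurable Lam"
    using measurable_Pair2[OF u \<omega>] by simp
  have "ennreal ((volterra K u t \<omega>)\<^sup>2)
      = ennreal ((\<integral>s. (indicator {0..t} s * K t s) * u s \<omega> \<partial>Lam)\<^sup>2)"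
    unfolding volterra_eq_Lam[OF t] by (simp add: mult.assoc)
  also have "\<dots> \<le> (\<integral>\<^sup>+s. ennreal ((indicator {0..t} s * K t s)\<^sup>2) \<partial>Lam) * energy u \<omega>"
    unfolding energy_def by (rule square_integral_mult_le[OF k v])
  also have "(\<integral>\<^sup>+s. ennreal ((indicator {0..t} s * K t s)\<^sup>2) \<partial>Lam)
      = (\<integral>\<^sup>+s\<in>{0..t}. ennreal ((K t s)\<^sup>2) \<partial>lborel)"
    unfolding nn_integral_Icc_eq_Lam[symmetric]
    using t by (intro nn_integral_cong) (auto simp: indicator_def)
  finally show ?thesis using bound by (meson order_trans mult_right_mono zero_le)
qed

lemma square_integrable_of_energy_bound:
  assumes u: "square_integrable P (hat u)" and W: "hat W \<in> borel_measurable P" and c: "0 \<le> c"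
    and bound: "\<And>\<omega> t. \<omega> \<in> space M \<Longrightarrow> 0 \<le> t \<Longrightarrow> t \<le> T \<Longrightarrow>
      ennreal ((W t \<omega>)\<^sup>2) \<le> ennreal c * energy u \<omega>"
  shows "square_integrable P (hat W)" and "sqnorm P (hat W) \<le> c * T * sqnorm P (hat u)"
proof -
  have energy: "energy u \<in> borel_measurable M"
    using u measurable_energy unfolding square_integrable_def by blast
  have "(\<integral>\<^sup>+p. ennreal ((hat W p)\<^sup>2) \<partial>P) \<le> (\<integral>\<^sup>+p. ennreal c * energy u (fst p) \<partial>P)"
    using bound by (intro nn_integral_mono) (auto simp: space_pair_measure hat_def)
  also have "\<dots> = (\<integral>\<^sup>+\<omega>. (\<integral>\<^sup>+t. ennreal c * energy u \<omega> \<partial>Lam) \<partial>M)"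
  proof -
    have "(\<lambda>p. ennreal c * energy u (fst p)) \<in> borel_measurable P" using energy by measurable
    from Lam.nn_integral_fst[OF this] show ?thesis by simp
  qed
  also have "\<dots> = (\<integral>\<^sup>+\<omega>. ennreal (c * T) * energy u \<omega> \<partial>M)"
    using T_pos c emeasure_Lam_space by (intro nn_integral_cong) (simp add: ennreal_mult mult_ac)
  also have "\<dots> = ennreal (c * T * sqnorm P (hat u))"
    using energy nn_integral_energy[OF u] c T_pos sqnorm_nonneg[of P "hat u"]
    by (simp add: nn_integral_cmult ennreal_mult)
  finally have le: "(\<integral>\<^sup>+p. ennreal ((hat W p)\<^sup>2) \<partial>P) \<le> ennreal (c * T * sqnorm P (hat u))" .
  have W2: "(\<lambda>p. (hat W p)\<^sup>2) \<in> borel_measurable P" using W by measurable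
  have "(\<integral>\<^sup>+p. ennreal (norm ((hat W p)\<^sup>2)) \<partial>P) < \<infinity>"
    using le by (simp add: order.strict_trans1)
  then show "square_integrable P (hat W)"
    unfolding square_integrable_def using W W2 by (blast intro: integrableI_bounded)
  have "sqnorm P (hat W) = enn2real (\<integral>\<^sup>+p. ennreal ((hat W p)\<^sup>2) \<partial>P)"
    unfolding sqnorm_def by (rule integral_eq_nn_integral[OF W2]) auto
  also have "\<dots> \<le> c * T * sqnorm P (hat u)"
    using enn2real_mono[OF le] c T_pos sqnorm_nonneg[of P "hat u"] by simp
  finally show "sqnorm P (hat W) \<le> c * T * sqnorm P (hat u)" .
qed

lemma
  assumes u: "square_integrable P (hat u)" and K: "(\<lambda>(t, s). K t s) \<in> borel_measurable borel"
    and bound: "\<And>t. 0 \<le> t \<Longrightarrow> t \<le> T \<Longrightarrow> (\<integral>\<^sup>+s\<in>{0..t}. ennreal ((K t s)\<^sup>2) \<partial>lborel) \<le> ennreal B"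
    and "0 \<le> B"
  shows square_integrable_volterra: "square_integrable P (hat (volterra K u))"
    and sqnorm_volterra_le: "sqnorm P (hat (volterra K u)) \<le> B * T * sqnorm P (hat u)"
proof -
  have um: "hat u \<in> borel_measurable P" using u unfolding square_integrable_def by blast
  note energy_bound = square_integrable_of_energy_bound[OF u measurable_hat_volterra[OF um K] \<open>0 \<le> B\<close>]
  show "square_integrable P (hat (volterra K u))"
    by (rule energy_bound(1)) (use volterra_square_le_energy[OF um K _ _ _ bound] in auto)
  show "sqnorm P (hat (volterra K u)) \<le> B * T * sqnorm P (hat u)"
    by (rule energy_bound(2)) (use volterra_square_le_energy[OF um K _ _ _ bound] in auto)
qed

lemma square_integrable_volterra_at:
  assumes u: "square_integrable P (hat u)" and K: "(\<lambda>(t, s). K t s) \<in> borel_measurable borel"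
    and t: "0 \<le> t" "t \<le> T"
    and bound: "(\<integral>\<^sup>+s\<in>{0..t}. ennreal ((K t s)\<^sup>2) \<partial>lborel) \<le> ennreal B"
  shows "square_integrable M (volterra K u t)"
proof -
  have um: "hat u \<in> borel_measurable P" using u unfolding square_integrable_def by blast
  have V: "volterra K u t \<in> borel_measurable M"
    using measurable_Pair1[OF measurable_hat_volterra[OF um K], of t] t by simp
  have energy: "energy u \<in> borel_measurable M" using measurable_energy[OF um] .
  have "(\<integral>\<^sup>+\<omega>. ennreal (norm ((volterra K u t \<omega>)\<^sup>2)) \<partial>M) \<le> (\<integral>\<^sup>+\<omega>. ennreal B * energy u \<omega> \<partial>M)"
    using volterra_square_le_energy[OF um K _ t bound] by (intro nn_integral_mono) simp
  also have "\<dots> = ennreal B * ennreal (sqnorm P (hat u))"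
    using energy nn_integral_energy[OF u] by (simp add: nn_integral_cmult)
  also have "\<dots> < \<infinity>" by (simp add: ennreal_mult_less_top)
  finally show ?thesis
    unfolding square_integrable_def using V by (auto intro: integrableI_bounded)
qed

lemma nn_integral_const_kernel_le:
  assumes "0 \<le> t" "t \<le> T"
  shows "(\<integral>\<^sup>+s\<in>{0..t}. ennreal ((1::real)\<^sup>2) \<partial>lborel) \<le> ennreal T"
  using assms by (simp add: emeasure_lborel_Icc_eq)

end

locale execution_model = horizon_product M F T for M :: "'a measure" and F T +
  fixes G :: "real \<Rightarrow> real \<Rightarrow> real" and B :: real
    and h :: "real \<Rightarrow> real" and L C \<zeta> :: real
    and X0 \<gamma> \<phi> \<rho> :: real and S :: "real \<Rightarrow> 'a \<Rightarrow> real"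
  assumes G_measurable: "(\<lambda>(t, s). G t s) \<in> borel_measurable borel"
    and G_bound: "\<And>t. 0 \<le> t \<Longrightarrow> t \<le> T \<Longrightarrow>
      (\<integral>\<^sup>+s\<in>{0..t}. ennreal ((G t s)\<^sup>2) \<partial>lborel) \<le> ennreal B"
    and B_pos: "B > 0"
    and h_lipschitz: "L-lipschitz_on UNIV h"
    and h_growth: "\<And>x. \<bar>h x\<bar> \<le> C * (1 + \<bar>x\<bar> powr \<zeta>)"
    and C_pos: "C > 0" and \<zeta>_pos: "0 < \<zeta>" and \<zeta>_less_1: "\<zeta> < 1"
    and \<gamma>_pos: "\<gamma> > 0" and \<phi>_nonneg: "\<phi> \<ge> 0" and \<rho>_nonneg: "\<rho> \<ge> 0"
begin

lemma h_measurable [measurable]: "h \<in> borel_measurable borel"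
  using lipschitz_on_continuous_on[OF h_lipschitz] by (rule borel_measurable_continuous_onI)

lemma abs_h_diff_le: "\<bar>h x - h y\<bar> \<le> L * \<bar>x - y\<bar>"
  using lipschitz_onD[OF h_lipschitz] by (simp add: dist_real_def)

lemma h_square_le: "(h x)\<^sup>2 \<le> 2 * (h 0)\<^sup>2 + 2 * L\<^sup>2 * x\<^sup>2"
proof -
  have "\<bar>h x\<bar> \<le> \<bar>h 0\<bar> + L * \<bar>x\<bar>" using abs_h_diff_le[of x 0] by simp
  then have "(h x)\<^sup>2 \<le> (\<bar>h 0\<bar> + L * \<bar>x\<bar>)\<^sup>2"
    by (metis abs_ge_zero power2_abs power_mono)
  also have "\<dots> \<le> 2 * \<bar>h 0\<bar>\<^sup>2 + 2 * (L * \<bar>x\<bar>)\<^sup>2" by (rule square_add_le)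
  finally show ?thesis by (simp add: power_mult_distrib)
qed

lemmas square_integrable_volterra_G =
  square_integrable_volterra[OF _ G_measurable G_bound less_imp_le[OF B_pos]]
lemmas sqnorm_volterra_G_le =
  sqnorm_volterra_le[OF _ G_measurable G_bound less_imp_le[OF B_pos]]

lemma square_integrable_h_state:
  assumes "square_integrable P (hat g)" "square_integrable P (hat u)"
  shows "square_integrable P (\<lambda>p. h (hat g p + hat (volterra G u) p))"
proof -
  have Z: "square_integrable P (\<lambda>p. hat g p + hat (volterra G u) p)"
    using assms by (intro square_integrable_add square_integrable_volterra_G)
  show ?thesis
  proof (rule square_integrable_dominated)
    show "(\<lambda>p. h (hat g p + hat (volterra G u) p)) \<in> borel_measurable P"
      using measurable_comp[OF conjunct1[OF Z[unfolded square_integrable_def]] h_measurable]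
      by (simp add: comp_def)
    show "integrable P (\<lambda>p. 2 * (h 0)\<^sup>2 + 2 * L\<^sup>2 * (hat g p + hat (volterra G u) p)\<^sup>2)"
      using Z unfolding square_integrable_def by auto
  qed (rule h_square_le)
qed

definition gain :: "(real \<Rightarrow> 'a \<Rightarrow> real) \<Rightarrow> (real \<Rightarrow> 'a \<Rightarrow> real) \<Rightarrow> (real \<Rightarrow> 'a \<Rightarrow> real)
    \<Rightarrow> 'a \<times> real \<Rightarrow> real" where
  "gain a g u = (\<lambda>p. (hat a p - \<gamma> / 2 * hat u p - h (hat g p + hat (volterra G u) p)) * hat u p)"

definition inventory_term :: "(real \<Rightarrow> 'a \<Rightarrow> real) \<Rightarrow> real" where
  "inventory_term u =
     (\<integral>\<omega>. - (\<phi> / 2 * (LINT t:{0..T}|lborel. (inventory X0 u t \<omega>)\<^sup>2)) - \<rho> / 2 * (inventory X0 u T \<omega>)\<^sup>2 \<partial>M)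
     + X0 * (\<integral>\<omega>. S T \<omega> \<partial>M)"

lemma integrable_gain:
  assumes "square_integrable P (hat a)" "square_integrable P (hat g)" "square_integrable P (hat u)"
  shows "integrable P (gain a g u)"
proof -
  have "integrable P (\<lambda>p. hat a p * hat u p - \<gamma> / 2 * (hat u p * hat u p)
      - h (hat g p + hat (volterra G u) p) * hat u p)"
    using integrable_mult_if_square_integrable[OF assms(1,3)]
      integrable_mult_if_square_integrable[OF assms(3,3)]
      integrable_mult_if_square_integrable[OF square_integrable_h_state[OF assms(2,3)] assms(3)]
    by auto
  then show ?thesis unfolding gain_def by (simp add: algebra_simps)
qed

lemma
  assumes "square_integrable P (hat u)"
  shows integrable_inventory_square_integral:
      "integrable M (\<lambda>\<omega>. LINT t:{0..T}|lborel. (inventory X0 u t \<omega>)\<^sup>2)"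
    and integrable_terminal_inventory_square: "integrable M (\<lambda>\<omega>. (inventory X0 u T \<omega>)\<^sup>2)"
proof -
  have "square_integrable P (hat (volterra (\<lambda>_ _. 1) u))"
    using square_integrable_volterra[OF assms _ nn_integral_const_kernel_le] T_pos by simp
  then have "square_integrable P (\<lambda>p. X0 + hat (volterra (\<lambda>_ _. 1) u) p)"
    by (rule square_integrable_add[OF P.square_integrable_const])
  then have "integrable P (\<lambda>p. (hat (inventory X0 u) p)\<^sup>2)"
    unfolding square_integrable_def by (simp add: hat_def inventory_eq_volterra case_prod_beta')
  from P.integrable_fst'[OF this]
  show "integrable M (\<lambda>\<omega>. LINT t:{0..T}|lborel. (inventory X0 u t \<omega>)\<^sup>2)"
    by (simp add: set_integral_horizon_eq_Lam)
  have "square_integrable M (volterra (\<lambda>_ _. 1) u T)"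
    using square_integrable_volterra_at[OF assms _ _ _ nn_integral_const_kernel_le[of T]] T_pos
    by simp
  then have "square_integrable M (\<lambda>\<omega>. X0 + volterra (\<lambda>_ _. 1) u T \<omega>)"
    by (rule square_integrable_add[OF square_integrable_const])
  then show "integrable M (\<lambda>\<omega>. (inventory X0 u T \<omega>)\<^sup>2)"
    unfolding square_integrable_def by (simp add: inventory_eq_volterra)
qed

lemma perf_eq_gain_add_inventory_term:
  assumes a: "square_integrable P (hat a)" and g: "square_integrable P (hat g)"
    and u: "square_integrable P (hat u)"
  shows "perf M T X0 \<gamma> \<phi> \<rho> S h G a g u = (\<integral>p. gain a g u p \<partial>P) + inventory_term u"
proof -
  define I where "I \<omega> = (LINT t:{0..T}|lborel.
    (a t \<omega> - \<gamma> / 2 * u t \<omega> - h (g t \<omega> + volterra G u t \<omega>)) * u t \<omega>)" for \<omega>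
  define R where "R \<omega> = - (\<phi> / 2 * (LINT t:{0..T}|lborel. (inventory X0 u t \<omega>)\<^sup>2))
    - \<rho> / 2 * (inventory X0 u T \<omega>)\<^sup>2" for \<omega>
  have I_eq: "I \<omega> = (\<integral>t. gain a g u (\<omega>, t) \<partial>Lam)" for \<omega>
    unfolding I_def gain_def by (simp add: set_integral_horizon_eq_Lam)
  have "integrable M R"
    unfolding R_def
    using integrable_inventory_square_integral[OF u] integrable_terminal_inventory_square[OF u] by auto
  moreover have "integrable M I" "(\<integral>\<omega>. I \<omega> \<partial>M) = (\<integral>p. gain a g u p \<partial>P)"
    using P.integrable_fst'[OF integrable_gain[OF a g u]] P.integral_fst'[OF integrable_gain[OF a g u]]
    unfolding I_eq by simp_all
  moreover have "perf M T X0 \<gamma> \<phi> \<rho> S h G a g u = (\<integral>\<omega>. I \<omega> + R \<omega> \<partial>M) + X0 * (\<integral>\<omega>. S T \<omega> \<partial>M)"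
    unfolding perf_def I_def R_def by (simp add: algebra_simps)
  ultimately show ?thesis unfolding inventory_term_def R_def[symmetric] by simp
qed

lemma inventory_term_le: "inventory_term u \<le> X0 * (\<integral>\<omega>. S T \<omega> \<partial>M)"
proof -
  define cost where "cost \<omega> = \<phi> / 2 * (LINT t:{0..T}|lborel. (inventory X0 u t \<omega>)\<^sup>2)
    + \<rho> / 2 * (inventory X0 u T \<omega>)\<^sup>2" for \<omega>
  have "0 \<le> cost \<omega>" for \<omega>
    unfolding cost_def set_integral_horizon_eq_Lam using \<phi>_nonneg \<rho>_nonneg
    by (intro add_nonneg_nonneg mult_nonneg_nonneg integral_nonneg_AE) auto
  then have "0 \<le> (\<integral>\<omega>. cost \<omega> \<partial>M)" by (intro integral_nonneg_AE) auto
  moreover have "inventory_term u = (\<integral>\<omega>. - cost \<omega> \<partial>M) + X0 * (\<integral>\<omega>. S T \<omega> \<partial>M)"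
    unfolding inventory_term_def cost_def minus_add_distrib diff_conv_add_uminus ..
  ultimately show ?thesis by simp
qed

text \<open>The choice of \<open>\<eta>\<close> makes the state term \<open>2 \<eta> \<parallel>G u\<parallel>\<^sup>2 \<le> 2 \<eta> B T \<parallel>u\<parallel>\<^sup>2\<close>
  cost exactly \<open>\<gamma>/16 \<parallel>u\<parallel>\<^sup>2\<close>.\<close>
lemma integral_gain_le:
  assumes a: "square_integrable P (hat a)" and g: "square_integrable P (hat g)"
    and u: "square_integrable P (hat u)"
  defines "\<eta> \<equiv> \<gamma>\<^sup>2 / (128 * C\<^sup>2 * T * B)"
  shows "(\<integral>p. gain a g u p \<partial>P) \<le> 4 / \<gamma> * sqnorm P (hat a)
    + 4 * C\<^sup>2 / \<gamma> * ((1 + (1 / \<eta>) powr (\<zeta> / (1 - \<zeta>))) * T + 2 * \<eta> * sqnorm P (hat g))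
    - \<gamma> / 4 * sqnorm P (hat u)"
proof -
  define k where "k = (1 / \<eta>) powr (\<zeta> / (1 - \<zeta>))"
  have \<eta>: "\<eta> > 0" unfolding \<eta>_def using \<gamma>_pos C_pos T_pos B_pos by simp
  let ?V = "hat (volterra G u)"
  define R where "R p = 4 / \<gamma> * (hat a p)\<^sup>2
     + 4 * C\<^sup>2 / \<gamma> * (1 + k + 2 * \<eta> * (hat g p)\<^sup>2 + 2 * \<eta> * (?V p)\<^sup>2) - 5 * \<gamma> / 16 * (hat u p)\<^sup>2"
    for p
  have V: "square_integrable P ?V" using square_integrable_volterra_G[OF u] .
  have "(\<integral>p. gain a g u p \<partial>P) \<le> (\<integral>p. R p \<partial>P)"
  proof (rule integral_mono[OF integrable_gain[OF a g u]])
    show "integrable P R" unfolding R_def using a g u V unfolding square_integrable_def by auto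
    show "gain a g u p \<le> R p" for p
      unfolding gain_def R_def k_def
      using \<gamma>_pos \<eta> \<zeta>_pos \<zeta>_less_1 h_growth by (intro gain_integrand_le) auto
  qed
  also have "(\<integral>p. R p \<partial>P) = 4 / \<gamma> * sqnorm P (hat a)
      + 4 * C\<^sup>2 / \<gamma> * ((1 + k) * T + 2 * \<eta> * sqnorm P (hat g) + 2 * \<eta> * sqnorm P ?V)
      - 5 * \<gamma> / 16 * sqnorm P (hat u)"
    unfolding R_def sqnorm_def using a g u V measure_P_space
    unfolding square_integrable_def by (simp add: algebra_simps)
  also have "\<dots> \<le> 4 / \<gamma> * sqnorm P (hat a)
      + 4 * C\<^sup>2 / \<gamma> * ((1 + k) * T + 2 * \<eta> * sqnorm P (hat g) + 2 * \<eta> * (B * T * sqnorm P (hat u)))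
      - 5 * \<gamma> / 16 * sqnorm P (hat u)"
    using sqnorm_volterra_G_le[OF u] \<eta> \<gamma>_pos
    by (intro add_right_mono diff_right_mono mult_left_mono add_left_mono) auto
  also have "\<dots> = 4 / \<gamma> * sqnorm P (hat a)
      + 4 * C\<^sup>2 / \<gamma> * ((1 + k) * T + 2 * \<eta> * sqnorm P (hat g)) - \<gamma> / 4 * sqnorm P (hat u)"
    unfolding \<eta>_def using \<gamma>_pos C_pos T_pos B_pos by (simp add: field_simps power2_eq_square)
  finally show ?thesis unfolding k_def .
qed

lemma perf_coercive:
  obtains K where "\<And>a g u. square_integrable P (hat a) \<Longrightarrow> square_integrable P (hat g) \<Longrightarrow>
      square_integrable P (hat u) \<Longrightarrow> sqnorm P (hat a) \<le> A \<Longrightarrow> sqnorm P (hat g) \<le> A \<Longrightarrow>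
      perf M T X0 \<gamma> \<phi> \<rho> S h G a g u \<le> K - \<gamma> / 4 * sqnorm P (hat u)"
proof
  define \<eta> where "\<eta> = \<gamma>\<^sup>2 / (128 * C\<^sup>2 * T * B)"
  have \<eta>: "\<eta> > 0" unfolding \<eta>_def using \<gamma>_pos C_pos T_pos B_pos by simp
  fix a g u
  assume a: "square_integrable P (hat a)" and g: "square_integrable P (hat g)"
    and u: "square_integrable P (hat u)" and "sqnorm P (hat a) \<le> A" "sqnorm P (hat g) \<le> A"
  then have "4 / \<gamma> * sqnorm P (hat a) \<le> 4 / \<gamma> * A"
    and "4 * C\<^sup>2 / \<gamma> * ((1 + (1 / \<eta>) powr (\<zeta> / (1 - \<zeta>))) * T + 2 * \<eta> * sqnorm P (hat g))
      \<le> 4 * C\<^sup>2 / \<gamma> * ((1 + (1 / \<eta>) powr (\<zeta> / (1 - \<zeta>))) * T + 2 * \<eta> * A)"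
    using \<gamma>_pos \<eta> by (intro mult_left_mono add_left_mono; simp)+
  then show "perf M T X0 \<gamma> \<phi> \<rho> S h G a g u \<le> 4 / \<gamma> * A
      + 4 * C\<^sup>2 / \<gamma> * ((1 + (1 / \<eta>) powr (\<zeta> / (1 - \<zeta>))) * T + 2 * \<eta> * A)
      + X0 * (\<integral>\<omega>. S T \<omega> \<partial>M) - \<gamma> / 4 * sqnorm P (hat u)"
    using perf_eq_gain_add_inventory_term[OF a g u] integral_gain_le[OF a g u, folded \<eta>_def]
      inventory_term_le[of u]
    by linarith
qed
lemma abs_perf_diff_le:
  assumes a: "square_integrable P (hat a)" and a': "square_integrable P (hat a')"
    and g: "square_integrable P (hat g)" and g': "square_integrable P (hat g')"
    and u: "square_integrable P (hat u)" and \<kappa>: "\<kappa> > 0"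
  shows "\<bar>perf M T X0 \<gamma> \<phi> \<rho> S h G a' g' u - perf M T X0 \<gamma> \<phi> \<rho> S h G a g u\<bar>
    \<le> (sqnorm P (\<lambda>p. hat a' p - hat a p) + L\<^sup>2 * sqnorm P (\<lambda>p. hat g' p - hat g p)) / \<kappa>
      + \<kappa> / 2 * sqnorm P (hat u)"
proof -
  define R where "R p = ((hat a' p - hat a p)\<^sup>2 + L\<^sup>2 * (hat g' p - hat g p)\<^sup>2) / \<kappa>
    + \<kappa> / 2 * (hat u p)\<^sup>2" for p
  have da: "square_integrable P (\<lambda>p. hat a' p - hat a p)" using square_integrable_diff[OF a' a] .
  have dg: "square_integrable P (\<lambda>p. hat g' p - hat g p)" using square_integrable_diff[OF g' g] .
  have pointwise: "\<bar>gain a' g' u p - gain a g u p\<bar> \<le> R p" for p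
  proof -
    let ?da = "hat a' p - hat a p" and ?dg = "hat g' p - hat g p" and ?u = "hat u p"
    let ?V = "hat (volterra G u) p"
    have "\<bar>gain a' g' u p - gain a g u p\<bar> = \<bar>?da - (h (hat g' p + ?V) - h (hat g p + ?V))\<bar> * \<bar>?u\<bar>"
      unfolding gain_def by (simp add: algebra_simps flip: abs_mult)
    also have "\<dots> \<le> (\<bar>?da\<bar> + L * \<bar>?dg\<bar>) * \<bar>?u\<bar>"
      using abs_h_diff_le[of "hat g' p + ?V" "hat g p + ?V"] by (intro mult_right_mono) auto
    also have "\<dots> \<le> (\<bar>?da\<bar> + L * \<bar>?dg\<bar>)\<^sup>2 / (2 * \<kappa>) + \<kappa> * \<bar>?u\<bar>\<^sup>2 / 2"
      by (rule mult_le_square_div_add_square[OF \<kappa>])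
    also have "\<dots> \<le> (2 * \<bar>?da\<bar>\<^sup>2 + 2 * (L * \<bar>?dg\<bar>)\<^sup>2) / (2 * \<kappa>) + \<kappa> * \<bar>?u\<bar>\<^sup>2 / 2"
      using square_add_le[of "\<bar>?da\<bar>" "L * \<bar>?dg\<bar>"] \<kappa> by (intro add_right_mono divide_right_mono) auto
    also have "\<dots> = R p" unfolding R_def using \<kappa> by (simp add: field_simps power_mult_distrib)
    finally show ?thesis .
  qed
  have "\<bar>\<integral>p. gain a' g' u p - gain a g u p \<partial>P\<bar> \<le> (\<integral>p. \<bar>gain a' g' u p - gain a g u p\<bar> \<partial>P)"
    by (rule integral_abs_bound)
  also have "\<dots> \<le> (\<integral>p. R p \<partial>P)"
  proof (rule integral_mono)
    show "integrable P (\<lambda>p. \<bar>gain a' g' u p - gain a g u p\<bar>)"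
      using integrable_gain[OF a g u] integrable_gain[OF a' g' u] by auto
    show "integrable P R" unfolding R_def using da dg u unfolding square_integrable_def by auto
  qed (rule pointwise)
  also have "(\<integral>p. R p \<partial>P) = (sqnorm P (\<lambda>p. hat a' p - hat a p)
      + L\<^sup>2 * sqnorm P (\<lambda>p. hat g' p - hat g p)) / \<kappa> + \<kappa> / 2 * sqnorm P (hat u)"
    unfolding R_def sqnorm_def using da dg u unfolding square_integrable_def by simp
  finally show ?thesis
    using perf_eq_gain_add_inventory_term[OF a g u] perf_eq_gain_add_inventory_term[OF a' g' u]
      integrable_gain[OF a g u] integrable_gain[OF a' g' u] by simp
qed


lemma eventually_abs_perf_diff_le:
  assumes a: "square_integrable P (hat a)" and an: "\<And>n. square_integrable P (hat (an n))"
    and g: "square_integrable P (hat g)" and gn: "\<And>n. square_integrable P (hat (gn n))"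
    and a_lim: "(\<lambda>n. sqnorm P (\<lambda>p. hat (an n) p - hat a p)) \<longlonglongrightarrow> 0"
    and g_lim: "(\<lambda>n. sqnorm P (\<lambda>p. hat (gn n) p - hat g p)) \<longlonglongrightarrow> 0"
    and "\<epsilon> > 0"
  shows "\<forall>\<^sub>F n in sequentially. \<forall>u. square_integrable P (hat u) \<longrightarrow> sqnorm P (hat u) \<le> R \<longrightarrow>
    \<bar>perf M T X0 \<gamma> \<phi> \<rho> S h G (an n) (gn n) u - perf M T X0 \<gamma> \<phi> \<rho> S h G a g u\<bar> \<le> \<epsilon>"
proof -
  define d where "d n = sqnorm P (\<lambda>p. hat (an n) p - hat a p)
    + L\<^sup>2 * sqnorm P (\<lambda>p. hat (gn n) p - hat g p)" for n
  define \<kappa> where "\<kappa> = \<epsilon> / max R 1"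
  have \<kappa>: "\<kappa> > 0" "\<kappa> / 2 * max R 1 = \<epsilon> / 2"
    unfolding \<kappa>_def using \<open>\<epsilon> > 0\<close> by auto
  have "d \<longlonglongrightarrow> 0"
    unfolding d_def using tendsto_add[OF a_lim tendsto_mult_right_zero[OF g_lim]] by simp
  moreover have "\<epsilon> * \<kappa> / 2 > 0" using \<open>\<epsilon> > 0\<close> \<kappa> by simp
  ultimately have "\<forall>\<^sub>F n in sequentially. d n < \<epsilon> * \<kappa> / 2"
    by (rule order_tendstoD(2))
  then show ?thesis
  proof (rule eventually_mono, intro allI impI)
    fix n u assume "d n < \<epsilon> * \<kappa> / 2" and u: "square_integrable P (hat u)" and "sqnorm P (hat u) \<le> R"
    then have "d n / \<kappa> \<le> \<epsilon> / 2" using \<kappa> by (simp add: field_simps)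
    moreover have "\<kappa> / 2 * sqnorm P (hat u) \<le> \<kappa> / 2 * max R 1"
      using \<open>sqnorm P (hat u) \<le> R\<close> \<kappa>(1) by (intro mult_left_mono) auto
    ultimately show "\<bar>perf M T X0 \<gamma> \<phi> \<rho> S h G (an n) (gn n) u - perf M T X0 \<gamma> \<phi> \<rho> S h G a g u\<bar> \<le> \<epsilon>"
      using abs_perf_diff_le[OF a an[of n] g gn[of n] u \<kappa>(1)] \<kappa>(2) unfolding d_def by linarith
  qed
qed

lemma eventually_sqnorm_le:
  assumes "square_integrable P f" "\<And>n. square_integrable P (fn n)"
    and "(\<lambda>n. sqnorm P (\<lambda>p. fn n p - f p)) \<longlonglongrightarrow> 0"
  shows "\<forall>\<^sub>F n in sequentially. sqnorm P (fn n) \<le> 2 * sqnorm P f + 2"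
  using order_tendstoD(2)[OF assms(3) zero_less_one]
proof (rule eventually_mono)
  fix n assume "sqnorm P (\<lambda>p. fn n p - f p) < 1"
  then show "sqnorm P (fn n) \<le> 2 * sqnorm P f + 2"
    using sqnorm_le_twice[OF assms(1) assms(2)[of n]] by linarith
qed

lemma tendsto_SUP_perf:
  fixes \<alpha> g :: "real \<Rightarrow> 'a \<Rightarrow> real" and \<alpha>n gn :: "nat \<Rightarrow> real \<Rightarrow> 'a \<Rightarrow> real"
  assumes \<alpha>: "L2proc M F T \<alpha>" and g: "L2proc M F T g"
    and \<alpha>n: "\<And>n. L2proc M F T (\<alpha>n n)" and gn: "\<And>n. L2proc M F T (gn n)"
    and \<alpha>_lim: "(\<lambda>n. L2norm M T (\<lambda>t \<omega>. \<alpha>n n t \<omega> - \<alpha> t \<omega>)) \<longlonglongrightarrow> 0"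
    and g_lim: "(\<lambda>n. L2norm M T (\<lambda>t \<omega>. gn n t \<omega> - g t \<omega>)) \<longlonglongrightarrow> 0"
  shows "(\<lambda>n. SUP u\<in>{u. L2proc M F T u}. ereal (perf M T X0 \<gamma> \<phi> \<rho> S h G (\<alpha>n n) (gn n) u))
    \<longlonglongrightarrow> (SUP u\<in>{u. L2proc M F T u}. ereal (perf M T X0 \<gamma> \<phi> \<rho> S h G \<alpha> g u))"
proof -
  note sq = square_integrable_hat
  note \<alpha>_lim' = sqnorm_diff_tendsto_0[OF \<alpha> \<alpha>n \<alpha>_lim] and g_lim' = sqnorm_diff_tendsto_0[OF g gn g_lim]
  define A where "A = 2 * max (sqnorm P (hat \<alpha>)) (sqnorm P (hat g)) + 2"
  obtain K where coercive:
    "\<And>a g u. square_integrable P (hat a) \<Longrightarrow> square_integrable P (hat g) \<Longrightarrow>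
      square_integrable P (hat u) \<Longrightarrow> sqnorm P (hat a) \<le> A \<Longrightarrow> sqnorm P (hat g) \<le> A \<Longrightarrow>
      perf M T X0 \<gamma> \<phi> \<rho> S h G a g u \<le> K - \<gamma> / 4 * sqnorm P (hat u)"
    by (rule perf_coercive[where A = A]) (rule that)
  have bounded: "sqnorm P (hat \<alpha>) \<le> A" "sqnorm P (hat g) \<le> A"
    unfolding A_def using sqnorm_nonneg[of P "hat \<alpha>"] sqnorm_nonneg[of P "hat g"] by linarith+
  show ?thesis
  proof (rule tendsto_SUP_if_coercive_locally_uniform[where c = "\<gamma> / 4" and K = K])
    show "{u. L2proc M F T u} \<noteq> {}"
      unfolding L2proc_def progressive_def by (auto intro!: exI[of _ "\<lambda>t \<omega>. 0"])
    show "\<gamma> / 4 > 0" using \<gamma>_pos by simp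
    show "perf M T X0 \<gamma> \<phi> \<rho> S h G \<alpha> g u \<le> K" if "u \<in> {u. L2proc M F T u}" for u
      using coercive[OF sq[OF \<alpha>] sq[OF g] sq[of u] bounded] that \<gamma>_pos sqnorm_nonneg[of P "hat u"]
      by (auto intro: order_trans)
    have "\<forall>\<^sub>F n in sequentially. sqnorm P (hat (\<alpha>n n)) \<le> 2 * sqnorm P (hat \<alpha>) + 2
        \<and> sqnorm P (hat (gn n)) \<le> 2 * sqnorm P (hat g) + 2"
      using sq \<alpha> \<alpha>n g gn \<alpha>_lim' g_lim' by (intro eventually_conj eventually_sqnorm_le) auto
    then show "\<forall>\<^sub>F n in sequentially. \<forall>u\<in>{u. L2proc M F T u}.
        perf M T X0 \<gamma> \<phi> \<rho> S h G (\<alpha>n n) (gn n) u \<le> K - \<gamma> / 4 * sqnorm P (hat u)"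
      using coercive[OF sq[OF \<alpha>n] sq[OF gn] sq] unfolding A_def
      by (auto elim!: eventually_mono)
    show "\<forall>\<^sub>F n in sequentially. \<forall>u\<in>{u. L2proc M F T u}. sqnorm P (hat u) \<le> R \<longrightarrow>
        \<bar>perf M T X0 \<gamma> \<phi> \<rho> S h G (\<alpha>n n) (gn n) u - perf M T X0 \<gamma> \<phi> \<rho> S h G \<alpha> g u\<bar> \<le> \<epsilon>"
      if "\<epsilon> > 0" for R \<epsilon>
      using eventually_abs_perf_diff_le[OF sq[OF \<alpha>] sq[OF \<alpha>n] sq[OF g] sq[OF gn] \<alpha>_lim' g_lim' that,
          of R]
      by (auto intro: sq elim!: eventually_mono)
  qed
qed

end

theorem mainTheorem6:
  fixes M :: "'a measure" and F :: "real \<Rightarrow> 'a measure"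
    and T X0 \<gamma> \<phi> \<rho> C \<zeta> :: real
    and S g \<alpha> :: "real \<Rightarrow> 'a \<Rightarrow> real"
    and \<alpha>n gn :: "nat \<Rightarrow> real \<Rightarrow> 'a \<Rightarrow> real"
    and h :: "real \<Rightarrow> real" and G :: "real \<Rightarrow> real \<Rightarrow> real"
  assumes "prob_space M"
    and "T > 0"
    and "usual_filtration M F T"
    and "X0 > 0" and "\<gamma> > 0" and "\<phi> \<ge> 0" and "\<rho> \<ge> 0"
    and "L2proc M F T S"
    and "S T \<in> borel_measurable (F T)" and "integrable M (\<lambda>\<omega>. (S T \<omega>)\<^sup>2)"
    and "L2proc M F T g"
    and "L2proc M F T \<alpha>"
    and "\<forall>t\<in>{0..T}. AE \<omega> in M. \<alpha> t \<omega> = real_cond_exp M (F t) (\<lambda>\<omega>. S T \<omega> - S t \<omega>) \<omega>"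
    and "admissible_kernel T G"
    and "\<exists>L. L-lipschitz_on UNIV h"
    and "0 < \<zeta>" and "\<zeta> < 1" and "C > 0"
    and "\<forall>x. \<bar>h x\<bar> \<le> C * (1 + \<bar>x\<bar> powr \<zeta>)"
    and "\<forall>n. L2proc M F T (\<alpha>n n) \<and> L2proc M F T (gn n)"
    and "(\<lambda>n. L2norm M T (\<lambda>t \<omega>. \<alpha>n n t \<omega> - \<alpha> t \<omega>)) \<longlonglongrightarrow> 0"
    and "(\<lambda>n. L2norm M T (\<lambda>t \<omega>. gn n t \<omega> - g t \<omega>)) \<longlonglongrightarrow> 0"
  shows "(\<lambda>n. SUP u\<in>{u. L2proc M F T u}. ereal (perf M T X0 \<gamma> \<phi> \<rho> S h G (\<alpha>n n) (gn n) u))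
           \<longlonglongrightarrow> (SUP u\<in>{u. L2proc M F T u}. ereal (perf M T X0 \<gamma> \<phi> \<rho> S h G \<alpha> g u))"
proof -
  have "subalgebra M (F T)"
    using assms(2,3) unfolding usual_filtration_def by auto
  then interpret horizon_product M F T
    using assms(1,2) by (simp add: horizon_product_def horizon_product_axioms_def)
  obtain B where G_bound: "\<And>t. 0 \<le> t \<Longrightarrow> t \<le> T \<Longrightarrow>
      (\<integral>\<^sup>+s\<in>{0..t}. ennreal ((G t s)\<^sup>2) \<partial>lborel) \<le> ennreal B" and "B > 0"
  proof -
    obtain B0 where "\<forall>t\<in>{0..T}. (\<integral>\<^sup>+s\<in>{0..t}. ennreal ((G t s)\<^sup>2) \<partial>lborel) \<le> ennreal B0"
      using assms(14) unfolding admissible_kernel_def by blast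
    then show thesis
      by (intro that[of "max B0 1"])
        (auto intro: order_trans[OF _ ennreal_leI[OF max.cobounded1]])
  qed
  obtain L where "L-lipschitz_on UNIV h"
    using assms(15) by blast
  interpret execution_model M F T G B h L C \<zeta> X0 \<gamma> \<phi> \<rho> S
    using assms(5-7,14,16-19) G_bound \<open>B > 0\<close> \<open>L-lipschitz_on UNIV h\<close>
    by unfold_locales (auto simp: admissible_kernel_def)
  show ?thesis
    using assms(11,12,20-22) by (intro tendsto_SUP_perf) auto
qed

end
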